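(* Let $T$ be a rooted binary tree with black/white-coloured leaves and the induced node colouring and classification as described in the context, and suppose $T$ contains more than one maximal black subtree. Then no SPR operation on $T$ belonging to the class $(\mathrm{W},\mathrm{b},\mathrm{B},\ast)$, $(\mathrm{W},\mathrm{b},\mathrm{W},\ast)$ or $(\mathrm{W},\mathrm{b},\mathrm{G},\ast)$ produces a compatible tree.
   Context: All trees are rooted binary trees; every non-leaf node has exactly two children and every non-root node $n$ has a parent $\mathrm{pa}(n)$. A "subtree" always means a node together with all of its descendants. Colouring: each leaf is coloured black (B) or white (W); an internal node is black if both children are black, white if both children are white, and grey (G) otherwise. A subtree is black (resp. white) if all its nodes are black (resp. white); it is maximal if no strictly larger subtree containing it is black (resp. white). Classification: a black or white node is of type "r" if it is the root of a maximal subtree of its own colour, and of type "b" otherwise; all grey nodes are of type "b" by convention. A tree is compatible if it contains at most one maximal black subtree. SPR operation $(u,v)$ on $T$: $u$ is a non-root node, $v$ is a node with $v\notin\{u,\mathrm{pa}(u)\}$ and $v$ not a descendant of $u$; the subtree rooted at $u$ is pruned (the edge to $u$ is removed and $\mathrm{pa}(u)$ deleted, its other child taking its place), then regrafted by inserting a new node on the edge from $v$ to its parent (or as a new root above $v$ if $v$ is the root) whose two children are $v$ and $u$; colours of the resulting tree are recomputed by the same rule. The operation belongs to class $(x,y,z,w)$ where $x,z\in\{\mathrm{B},\mathrm{W},\mathrm{G}\}$ are the colours in $T$ of $u$ and $v$, and $y,w\in\{\mathrm{r},\mathrm{b}\}$ their classifications in $T$; $\ast$ denotes any value. *)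

theory Defs
  imports Main "HOL-Library.Sublist"
begin

text \<open>Rooted binary trees with black (True) / white (False) coloured leaves.
Nodes are addressed by their path from the root (False = left child, True = right child).\<close>

datatype tree = Leaf bool | Node tree tree

datatype col = Bl | Wh | Gr

datatype cls = Cr | Cb

fun positions :: "tree \<Rightarrow> bool list set" where
  "positions (Leaf c) = {[]}"
| "positions (Node l r) = {[]} \<union> Cons False ` positions l \<union> Cons True ` positions r"

fun subtree :: "tree \<Rightarrow> bool list \<Rightarrow> tree" where
  "subtree t [] = t"
| "subtree (Node l r) (False # p) = subtree l p"
| "subtree (Node l r) (True # p) = subtree r p"
| "subtree (Leaf c) (_ # p) = Leaf c"

fun replace :: "tree \<Rightarrow> bool list \<Rightarrow> tree \<Rightarrow> tree" where
  "replace t [] s = s"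
| "replace (Node l r) (False # p) s = Node (replace l p s) r"
| "replace (Node l r) (True # p) s = Node l (replace r p s)"
| "replace (Leaf c) (_ # p) s = Leaf c"

fun colour :: "tree \<Rightarrow> col" where
  "colour (Leaf c) = (if c then Bl else Wh)"
| "colour (Node l r) =
     (if colour l = Bl \<and> colour r = Bl then Bl
      else if colour l = Wh \<and> colour r = Wh then Wh else Gr)"

definition col_at :: "tree \<Rightarrow> bool list \<Rightarrow> col" where
  "col_at t p = colour (subtree t p)"

definition mono_subtree :: "tree \<Rightarrow> bool list \<Rightarrow> col \<Rightarrow> bool" where
  "mono_subtree t p c \<longleftrightarrow> p \<in> positions t \<and>
     (\<forall>q. p @ q \<in> positions t \<longrightarrow> col_at t (p @ q) = c)"

definition maximal_subtree :: "tree \<Rightarrow> bool list \<Rightarrow> col \<Rightarrow> bool" where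
  "maximal_subtree t p c \<longleftrightarrow> mono_subtree t p c \<and>
     (\<forall>q. strict_prefix q p \<longrightarrow> \<not> mono_subtree t q c)"

definition classify :: "tree \<Rightarrow> bool list \<Rightarrow> cls" where
  "classify t p = (if (col_at t p = Bl \<or> col_at t p = Wh) \<and> maximal_subtree t p (col_at t p)
                   then Cr else Cb)"

definition num_max_black :: "tree \<Rightarrow> nat" where
  "num_max_black t = card {p. maximal_subtree t p Bl}"

definition compatible :: "tree \<Rightarrow> bool" where
  "compatible t \<longleftrightarrow> num_max_black t \<le> 1"

definition spr_valid :: "tree \<Rightarrow> bool list \<Rightarrow> bool list \<Rightarrow> bool" where
  "spr_valid t u v \<longleftrightarrow> u \<in> positions t \<and> u \<noteq> [] \<and> v \<in> positions t \<and>
     v \<noteq> u \<and> v \<noteq> butlast u \<and> \<not> prefix u v"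

text \<open>Result of SPR (u,v): prune the subtree at u (the sibling of u replaces its parent),
then regraft it on the edge above v (new node with children v and u).\<close>
definition spr :: "tree \<Rightarrow> bool list \<Rightarrow> bool list \<Rightarrow> tree" where
  "spr t u v =
    (let pa = butlast u; sib = pa @ [\<not> last u];
         t' = replace t pa (subtree t sib);
         v' = (if prefix sib v then pa @ drop (length sib) v else v)
     in replace t' v' (Node (subtree t' v') (subtree t u)))"

end

theory Submission
  imports Defs
begin

(* Since u is white but not the root of a maximal white subtree, its parent is white, and hence
   so is its sibling. Pruning u therefore replaces one white subtree by another, which leaves
   every maximal black subtree in place. Regrafting the white subtree above v creates a node that
   is not black, so it can split a maximal black subtree in two but never merge two of them. *)

fun black_roots :: "tree \<Rightarrow> bool list set" where
  "black_roots (Leaf c) = (if c then {[]} else {})"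
| "black_roots (Node l r) =
     (if colour (Node l r) = Bl then {[]}
      else Cons False ` black_roots l \<union> Cons True ` black_roots r)"

fun black_count :: "tree \<Rightarrow> nat" where
  "black_count (Leaf c) = (if c then 1 else 0)"
| "black_count (Node l r) =
     (if colour (Node l r) = Bl then 1 else black_count l + black_count r)"

lemma finite_black_roots: "finite (black_roots t)"
  by (induction t) auto

lemma card_black_roots: "card (black_roots t) = black_count t"
proof (induction t)
  case (Node l r)
  have "card (Cons False ` black_roots l \<union> Cons True ` black_roots r)
      = card (black_roots l) + card (black_roots r)"
    by (subst card_Un_disjoint) (auto simp: finite_black_roots card_image)
  with Node show ?case
    by (simp del: colour.simps)
qed simp

lemma subtree_Leaf [simp]: "subtree (Leaf c) q = Leaf c"
  by (cases q) auto

lemma subtree_append: "subtree t (p @ q) = subtree (subtree t p) q"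
  by (induction t p rule: subtree.induct) auto

lemma colour_subtree_eq:
  assumes "c \<noteq> Gr" and "colour t = c"
  shows "colour (subtree t q) = c"
  using assms by (induction t q rule: subtree.induct) (auto split: if_splits)

lemma positions_append_prefix: "p @ q \<in> positions t \<Longrightarrow> p \<in> positions t"
proof (induction t arbitrary: p)
  case (Node l r)
  then show ?case
    by (cases p) auto
qed simp

lemma mono_subtree_iff:
  assumes "c \<noteq> Gr"
  shows "mono_subtree t p c \<longleftrightarrow> p \<in> positions t \<and> colour (subtree t p) = c"
  unfolding mono_subtree_def col_at_def
  by (metis append_Nil2 assms colour_subtree_eq subtree_append)

lemma maximal_subtree_Bl_iff:
  "maximal_subtree t p Bl \<longleftrightarrow> p \<in> positions t \<and> colour (subtree t p) = Bl \<and>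
     (\<forall>q. strict_prefix q p \<longrightarrow> colour (subtree t q) \<noteq> Bl)"
  unfolding maximal_subtree_def mono_subtree_iff[OF col.distinct(3)]
  by (metis positions_append_prefix prefixE strict_prefix_def)

lemma maximal_subtree_Bl_iff_black_roots:
  "maximal_subtree t p Bl \<longleftrightarrow> p \<in> black_roots t"
proof (induction t arbitrary: p)
  case (Leaf c)
  show ?case
    by (auto simp: maximal_subtree_Bl_iff strict_prefix_def)
next
  case (Node l r)
  show ?case
  proof (cases p)
    case Nil
    then show ?thesis
      by (auto simp: maximal_subtree_Bl_iff simp del: colour.simps)
  next
    case (Cons b p')
    have strict_prefix_Cons:
      "strict_prefix q (b # p') \<longleftrightarrow> q = [] \<or> (\<exists>q'. q = b # q' \<and> strict_prefix q' p')" for q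
      by (cases q) auto
    have "maximal_subtree (Node l r) (b # p') Bl \<longleftrightarrow>
        colour (Node l r) \<noteq> Bl \<and> maximal_subtree (if b then r else l) p' Bl"
      unfolding maximal_subtree_Bl_iff strict_prefix_Cons
      by (cases b) (auto simp del: colour.simps)
    with Cons Node.IH show ?thesis
      by (cases b) (auto simp del: colour.simps)
  qed
qed

lemma num_max_black_eq_black_count: "num_max_black t = black_count t"
  unfolding num_max_black_def maximal_subtree_Bl_iff_black_roots
  by (simp add: card_black_roots)

lemma black_count_Bl: "colour t = Bl \<Longrightarrow> black_count t = 1"
  by (cases t) (auto split: if_splits)

lemma black_count_Wh: "colour t = Wh \<Longrightarrow> black_count t = 0"
  by (induction t) (auto split: if_splits)

lemma colour_replace:
  "colour s = colour (subtree t p) \<Longrightarrow> colour (replace t p s) = colour t"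
  by (induction t p s rule: replace.induct) auto

lemma black_count_replace:
  assumes "colour s = colour (subtree t p)" and "black_count s = black_count (subtree t p)"
  shows "black_count (replace t p s) = black_count t"
  using assms
  by (induction t p s rule: replace.induct) (auto simp: colour_replace)

lemma colour_replace_Bl:
  assumes "colour s = Bl \<Longrightarrow> colour (subtree t p) = Bl" and "colour (replace t p s) = Bl"
  shows "colour t = Bl"
  using assms by (induction t p s rule: replace.induct) (auto split: if_splits)

lemma black_count_replace_ge:
  assumes "colour s = Bl \<Longrightarrow> colour (subtree t p) = Bl"
    and "black_count (subtree t p) \<le> black_count s"
  shows "black_count t \<le> black_count (replace t p s)"
  using assms
proof (induction t p s rule: replace.induct)
  case (2 l r p s)
  then show ?case
    using colour_replace_Bl[of s l p] black_count_Bl[of l] black_count_Bl[of r]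
    by (auto split: if_splits)
next
  case (3 l r p s)
  then show ?case
    using colour_replace_Bl[of s r p] black_count_Bl[of l] black_count_Bl[of r]
    by (auto split: if_splits)
qed auto

lemma black_count_graft_white:
  assumes "colour w = Wh"
  shows "black_count t \<le> black_count (replace t p (Node (subtree t p) w))"
  using assms by (intro black_count_replace_ge) (auto simp: black_count_Wh split: if_splits)

lemma white_parent_if_classify_Cb:
  assumes "u \<in> positions t" and "col_at t u = Wh" and "classify t u = Cb"
  shows "colour (subtree t (butlast u)) = Wh"
proof -
  have "mono_subtree t u Wh"
    using assms(1,2) by (simp add: mono_subtree_iff col_at_def)
  then obtain q where "strict_prefix q u" and "mono_subtree t q Wh"
    using assms(2,3) unfolding classify_def maximal_subtree_def by (auto split: if_splits)
  then have "colour (subtree t q) = Wh" and "prefix q (butlast u)"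
    by (auto simp: mono_subtree_iff prefix_def strict_prefix_def butlast_append)
  then show ?thesis
    by (metis col.distinct(6) colour_subtree_eq prefixE subtree_append)
qed

lemma black_count_spr_ge:
  assumes "colour (subtree t (butlast u)) = Wh" and "col_at t u = Wh"
  shows "black_count t \<le> black_count (spr t u v)"
proof -
  define pa where "pa = butlast u"
  define sib where "sib = pa @ [\<not> last u]"
  define t' where "t' = replace t pa (subtree t sib)"
  define v' where "v' = (if prefix sib v then pa @ drop (length sib) v else v)"
  have "colour (subtree t sib) = Wh"
    using assms(1) colour_subtree_eq[of Wh] by (simp add: pa_def sib_def subtree_append)
  then have "black_count t' = black_count t"
    unfolding t'_def using assms(1) by (intro black_count_replace) (simp_all add: pa_def black_count_Wh)
  moreover have "black_count t' \<le> black_count (replace t' v' (Node (subtree t' v') (subtree t u)))"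
    using assms(2) by (intro black_count_graft_white) (simp add: col_at_def)
  moreover have "spr t u v = replace t' v' (Node (subtree t' v') (subtree t u))"
    by (simp add: spr_def Let_def t'_def v'_def sib_def pa_def)
  ultimately show ?thesis
    by simp
qed

(* The hypothesis on the colour of v holds for every v. *)
theorem lemma4:
  fixes T :: tree and u v :: "bool list"
  assumes "num_max_black T > 1"
    and "spr_valid T u v"
    and "col_at T u = Wh" and "classify T u = Cb"
    and "col_at T v = Bl \<or> col_at T v = Wh \<or> col_at T v = Gr"
  shows "\<not> compatible (spr T u v)"
proof -
  have "colour (subtree T (butlast u)) = Wh"
    using assms(2-4) by (intro white_parent_if_classify_Cb) (simp_all add: spr_valid_def)
  then have "black_count T \<le> black_count (spr T u v)"
    using assms(3) by (rule black_count_spr_ge)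
  with assms(1) show ?thesis
    by (simp add: compatible_def num_max_black_eq_black_count)
qed

end
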